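(* Let $M=\max_{x\in V}d_x^{-1/2}$. For all $\lambda,\mu>0$ and $x,y\in V$, $$|\mathrm{KD}_\lambda(x,y)-\mathrm{KD}_\mu(x,y)|\le 2M\,\mathrm{vol}(V)^{1/2}|\lambda-\mu|.$$
   Context: Let $H=(V,E,w)$ be a weighted hypergraph: $V$ is a finite set, $E$ a set of nonempty subsets of $V$, $w\colon E\to\mathbb{R}_{>0}$. Write $x\sim y$ if some $e\in E$ contains both; $H$ is assumed connected. The degree is $d_x=\sum_{e\ni x}w_e>0$, $D=\mathrm{diag}(d_x)$, $\mathrm{vol}(V)=\sum_x d_x$. The distance $d(x,y)$ is the minimal $n$ with a chain $x=z_0\sim\cdots\sim z_n=y$. $\delta_x$ is the indicator of $x$. $\mathbb{R}^V$ carries the inner product $\langle f,g\rangle=\sum_x f(x)g(x)/d_x$ with norm $\|\cdot\|$. For $e\in E$ let $B_e=\mathrm{Conv}\{\delta_x-\delta_y : x,y\in e\}$. The multivalued hypergraph Laplacian is $L(f)=\{\sum_{e}w_e\mathtt{b}_e(\mathtt{b}_e^\top f) : \mathtt{b}_e\in\operatorname{argmax}_{\mathtt b\in B_e}\mathtt b^\top f\}$ and the normalized Laplacian is $\mathcal{L}f=L(D^{-1}f)$, a maximal monotone operator on $(\mathbb{R}^V,\langle\cdot,\cdot\rangle)$. For $\lambda>0$ the resolvent $J_\lambda=(I+\lambda\mathcal L)^{-1}$ is a single-valued map $\mathbb{R}^V\to\mathbb{R}^V$ (equivalently $J_\lambda f=\operatorname{argmin}_g\{\frac{1}{2\lambda}\|f-g\|^2+Q(D^{-1}g)\}$,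 $Q(g)=\frac12\sum_e w_e\max_{x,y\in e}(g(x)-g(y))^2$). A function $f$ is weighted $1$-Lipschitz if $|f(x)/d_x-f(y)/d_y|\le d(x,y)$ for all $x,y$; $\mathrm{Lip}^1_w(V)$ denotes the set of such functions. $\mathrm{KD}_\lambda(x,y)=\sup\{\langle J_\lambda f,\delta_x-\delta_y\rangle : f\in\mathrm{Lip}^1_w(V)\}$. *)

theory Defs
  imports "HOL-Analysis.Analysis"
begin

text \<open>Vertices form a finite type 'a (so V = UNIV); functions on V are vectors in real^'a.
  A weighted hypergraph is given by a set of hyperedges E and weights w.\<close>

definition hdeg :: "'a set set \<Rightarrow> ('a set \<Rightarrow> real) \<Rightarrow> 'a \<Rightarrow> real" where
  "hdeg E w x = (\<Sum>e\<in>{e\<in>E. x \<in> e}. w e)"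

definition hvol :: "'a::finite set set \<Rightarrow> ('a set \<Rightarrow> real) \<Rightarrow> real" where
  "hvol E w = (\<Sum>x\<in>UNIV. hdeg E w x)"

definition hadj :: "'a set set \<Rightarrow> 'a \<Rightarrow> 'a \<Rightarrow> bool" where
  "hadj E x y \<longleftrightarrow> (\<exists>e\<in>E. x \<in> e \<and> y \<in> e)"

definition hchain :: "'a set set \<Rightarrow> 'a \<Rightarrow> 'a \<Rightarrow> nat \<Rightarrow> bool" where
  "hchain E x y n \<longleftrightarrow> (\<exists>z::nat \<Rightarrow> 'a. z 0 = x \<and> z n = y \<and> (\<forall>i<n. hadj E (z i) (z (Suc i))))"

definition hconnected :: "'a set set \<Rightarrow> bool" where
  "hconnected E \<longleftrightarrow> (\<forall>x y. \<exists>n. hchain E x y n)"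

definition hdist :: "'a set set \<Rightarrow> 'a \<Rightarrow> 'a \<Rightarrow> nat" where
  "hdist E x y = (LEAST n. hchain E x y n)"

definition winner :: "'a::finite set set \<Rightarrow> ('a set \<Rightarrow> real) \<Rightarrow> real^'a \<Rightarrow> real^'a \<Rightarrow> real" where
  "winner E w f g = (\<Sum>x\<in>UNIV. f $ x * g $ x / hdeg E w x)"

definition delta :: "'a::finite \<Rightarrow> real^'a" where
  "delta x = axis x 1"

definition Bset :: "'a::finite set \<Rightarrow> (real^'a) set" where
  "Bset e = convex hull {delta x - delta y | x y. x \<in> e \<and> y \<in> e}"

definition argmaxB :: "'a::finite set \<Rightarrow> real^'a \<Rightarrow> (real^'a) set" where
  "argmaxB e f = {b \<in> Bset e. \<forall>b'\<in>Bset e. b' \<bullet> f \<le> b \<bullet> f}"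

definition hLap :: "'a::finite set set \<Rightarrow> ('a set \<Rightarrow> real) \<Rightarrow> real^'a \<Rightarrow> (real^'a) set" where
  "hLap E w f = {(\<Sum>e\<in>E. (w e * (b e \<bullet> f)) *\<^sub>R b e) | b. \<forall>e\<in>E. b e \<in> argmaxB e f}"

definition Dinv :: "'a::finite set set \<Rightarrow> ('a set \<Rightarrow> real) \<Rightarrow> real^'a \<Rightarrow> real^'a" where
  "Dinv E w f = (\<chi> x. f $ x / hdeg E w x)"

definition hLnorm :: "'a::finite set set \<Rightarrow> ('a set \<Rightarrow> real) \<Rightarrow> real^'a \<Rightarrow> (real^'a) set" where
  "hLnorm E w f = hLap E w (Dinv E w f)"

text \<open>Resolvent J_lambda = (I + lambda Lnorm)^{-1}: the unique g with f \<in> g + lambda Lnorm(g).\<close>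
definition resolvent :: "'a::finite set set \<Rightarrow> ('a set \<Rightarrow> real) \<Rightarrow> real \<Rightarrow> real^'a \<Rightarrow> real^'a" where
  "resolvent E w lam f = (THE g. \<exists>u\<in>hLnorm E w g. f = g + lam *\<^sub>R u)"

definition Lip1w :: "'a::finite set set \<Rightarrow> ('a set \<Rightarrow> real) \<Rightarrow> (real^'a) set" where
  "Lip1w E w = {f. \<forall>x y. \<bar>f $ x / hdeg E w x - f $ y / hdeg E w y\<bar> \<le> real (hdist E x y)}"

definition KD :: "'a::finite set set \<Rightarrow> ('a set \<Rightarrow> real) \<Rightarrow> real \<Rightarrow> 'a \<Rightarrow> 'a \<Rightarrow> real" where
  "KD E w lam x y = Sup {winner E w (resolvent E w lam f) (delta x - delta y) | f. f \<in> Lip1w E w}"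

end

theory Submission
  imports Defs
begin

(*
  The resolvent is characterized by f = g + lam u with u in Lnorm g, g = J_lam f, and Lnorm is
  monotone for the weighted inner product, which D^(-1/2) turns into the Euclidean one.  For a
  weighted 1-Lipschitz f, Lnorm f contains an element of norm at most vol(V)^(1/2), because
  D^(-1) f varies by at most 1 across an edge; monotonicity transfers this bound to
  u = (f - J_lam f) / lam, and comparing the equations for lam and mu yields
  |J_lam f - J_mu f| <= |lam - mu| vol(V)^(1/2).  Pairing with delta_x - delta_y, of norm at
  most 2M, and passing to the suprema over f gives the estimate.

  J_lam f exists because the variational functional attains its minimum: if the residual at a
  minimizer lay outside the compact convex set Lnorm g, a separating hyperplane would provide a
  descent direction.
*)

lemma continuous_on_Max:
  fixes g :: "'i \<Rightarrow> 'b::topological_space \<Rightarrow> real"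
  assumes "finite I" "I \<noteq> {}" "\<And>i. i \<in> I \<Longrightarrow> continuous_on S (g i)"
  shows "continuous_on S (\<lambda>x. MAX i\<in>I. g i x)"
  using assms
proof (induction I rule: finite_ne_induct)
  case (insert i F)
  then have "(\<lambda>x. MAX j\<in>insert i F. g j x) = (\<lambda>x. max (g i x) (MAX j\<in>F. g j x))"
    by simp
  then show ?case using insert by (auto intro!: continuous_on_max)
qed simp

lemma compact_convex_weighted_sums:
  fixes A :: "'e \<Rightarrow> 'b::euclidean_space set" and c :: "'e \<Rightarrow> real"
  assumes "finite F" "\<And>e. e \<in> F \<Longrightarrow> compact (A e) \<and> convex (A e)"
  shows "compact {\<Sum>e\<in>F. c e *\<^sub>R b e | b. \<forall>e\<in>F. b e \<in> A e} \<and>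
         convex {\<Sum>e\<in>F. c e *\<^sub>R b e | b. \<forall>e\<in>F. b e \<in> A e}"
  using assms
proof (induction F rule: finite_induct)
  case empty
  have "{\<Sum>e\<in>{}. c e *\<^sub>R b e | b. \<forall>e\<in>{}. b e \<in> A e} = {0}" by auto
  then show ?case by simp
next
  case (insert i F)
  let ?S = "{\<Sum>e\<in>F. c e *\<^sub>R b e | b. \<forall>e\<in>F. b e \<in> A e}"
  let ?U = "(\<lambda>u. c i *\<^sub>R u) ` A i"
  have "{\<Sum>e\<in>insert i F. c e *\<^sub>R b e | b. \<forall>e\<in>insert i F. b e \<in> A e} = (\<Union>x\<in>?U. \<Union>y\<in>?S. {x + y})"
  proof (intro set_eqI iffI)
    fix z assume "z \<in> {\<Sum>e\<in>insert i F. c e *\<^sub>R b e | b. \<forall>e\<in>insert i F. b e \<in> A e}"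
    then obtain b where "\<forall>e\<in>insert i F. b e \<in> A e" "z = c i *\<^sub>R b i + (\<Sum>e\<in>F. c e *\<^sub>R b e)"
      using insert.hyps by auto
    then show "z \<in> (\<Union>x\<in>?U. \<Union>y\<in>?S. {x + y})" by blast
  next
    fix z assume "z \<in> (\<Union>x\<in>?U. \<Union>y\<in>?S. {x + y})"
    then obtain u b where ub: "u \<in> A i" "\<forall>e\<in>F. b e \<in> A e"
      "z = c i *\<^sub>R u + (\<Sum>e\<in>F. c e *\<^sub>R b e)" by blast
    have "(\<Sum>e\<in>F. c e *\<^sub>R (b(i := u)) e) = (\<Sum>e\<in>F. c e *\<^sub>R b e)"
      using insert.hyps by (intro sum.cong) auto
    then have "z = (\<Sum>e\<in>insert i F. c e *\<^sub>R (b(i := u)) e)"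
      using ub insert.hyps by simp
    moreover have "\<forall>e\<in>insert i F. (b(i := u)) e \<in> A e" using ub by auto
    ultimately show "z \<in> {\<Sum>e\<in>insert i F. c e *\<^sub>R b e | b. \<forall>e\<in>insert i F. b e \<in> A e}"
      by blast
  qed
  moreover have "compact ?U" "convex ?U"
    using insert.prems by (auto intro: compact_scaling convex_scaling)
  moreover have "(\<Union>x\<in>?U. \<Union>y\<in>?S. {x + y}) = {x + y | x y. x \<in> ?U \<and> y \<in> ?S}"
    by blast
  ultimately show ?case
    using insert.IH insert.prems compact_sums[of ?U ?S] convex_sums[of ?U ?S] by auto
qed

lemma abs_cSUP_diff_le:
  fixes a b :: "'x \<Rightarrow> real"
  assumes "A \<noteq> {}" "bdd_above (a ` A)" "bdd_above (b ` A)" "\<And>f. f \<in> A \<Longrightarrow> \<bar>a f - b f\<bar> \<le> K"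
  shows "\<bar>Sup (a ` A) - Sup (b ` A)\<bar> \<le> K"
proof -
  have "Sup (a ` A) \<le> Sup (b ` A) + K"
    using assms cSUP_upper[OF _ assms(3)] by (intro cSUP_least) force+
  moreover have "Sup (b ` A) \<le> Sup (a ` A) + K"
    using assms cSUP_upper[OF _ assms(2)] by (intro cSUP_least) force+
  ultimately show ?thesis by linarith
qed

lemma norm_le_of_inner_self_le:
  fixes x :: "'b::real_inner"
  assumes "x \<bullet> x \<le> norm x * K" "0 \<le> K"
  shows "norm x \<le> K"
  using assms by (cases "x = 0") (auto simp: dot_square_norm power2_eq_square)

section \<open>The edge polytopes and their support functions\<close>

lemma delta_nth: "delta a $ z = (if z = a then 1 else 0)"
  by (simp add: delta_def axis_def)

lemma inner_delta: "delta a \<bullet> p = p $ a"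
  by (simp add: delta_def inner_axis')

lemma delta_diff_in_Bset: "a \<in> e \<Longrightarrow> b \<in> e \<Longrightarrow> delta a - delta b \<in> Bset e"
  unfolding Bset_def by (rule hull_inc) auto

lemma compact_Bset: "compact (Bset e)"
proof -
  have "{delta x - delta y |x y. x \<in> e \<and> y \<in> e} = (\<lambda>(x, y). delta x - delta y) ` (e \<times> e)"
    by auto
  then show ?thesis
    unfolding Bset_def by (simp add: compact_convex_hull finite_imp_compact)
qed

text \<open>\<open>osc e\<close> is the support function of \<open>Bset e\<close>.\<close>

definition osc :: "'a::finite set \<Rightarrow> real^'a \<Rightarrow> real" where
  "osc e p = Max ((\<lambda>(a, b). p$a - p$b) ` (e \<times> e))"

lemma osc_ge: "a \<in> e \<Longrightarrow> b \<in> e \<Longrightarrow> p$a - p$b \<le> osc e p"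
  unfolding osc_def by (rule Max_ge) force+

lemma osc_attained:
  assumes "e \<noteq> {}"
  obtains a b where "a \<in> e" "b \<in> e" "p$a - p$b = osc e p"
proof -
  have "osc e p \<in> (\<lambda>(a, b). p$a - p$b) ` (e \<times> e)"
    unfolding osc_def using assms by (intro Max_in) auto
  then show ?thesis using that by force
qed

lemma osc_nonneg: "e \<noteq> {} \<Longrightarrow> 0 \<le> osc e p"
  using osc_ge[of _ e _ p] by force

lemma inner_le_osc: "b \<in> Bset e \<Longrightarrow> b \<bullet> p \<le> osc e p"
proof -
  have "Bset e \<subseteq> {b. p \<bullet> b \<le> osc e p}"
    unfolding Bset_def
    by (rule hull_minimal[where S=convex, OF _ convex_halfspace_le])
       (auto simp: inner_commute[of p] inner_diff_left inner_delta osc_ge)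
  then show "b \<in> Bset e \<Longrightarrow> b \<bullet> p \<le> osc e p" by (auto simp: inner_commute)
qed

lemma argmaxB_eq:
  assumes "e \<noteq> {}"
  shows "argmaxB e p = Bset e \<inter> {b. osc e p \<le> p \<bullet> b}"
proof -
  obtain a b where "a \<in> e" "b \<in> e" "p$a - p$b = osc e p"
    using osc_attained[OF assms] .
  then have "delta a - delta b \<in> Bset e" "(delta a - delta b) \<bullet> p = osc e p"
    by (simp_all add: delta_diff_in_Bset inner_diff_left inner_delta)
  then show ?thesis
    unfolding argmaxB_def using inner_le_osc[of _ e p]
    by (auto simp: inner_commute[of p]) (metis order_trans)
qed

lemma inner_argmaxB: "e \<noteq> {} \<Longrightarrow> b \<in> argmaxB e p \<Longrightarrow> b \<bullet> p = osc e p"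
  using inner_le_osc[of b e p] by (auto simp: argmaxB_eq inner_commute[of p])

lemma delta_diff_in_argmaxB:
  assumes "a \<in> e" "b \<in> e" "p$a - p$b = osc e p"
  shows "delta a - delta b \<in> argmaxB e p"
proof -
  have "p \<bullet> (delta a - delta b) = osc e p"
    using assms(3) by (simp add: inner_diff_right inner_commute[of p] inner_delta)
  moreover have "e \<noteq> {}" using assms(1) by auto
  ultimately show ?thesis
    using assms by (simp add: argmaxB_eq delta_diff_in_Bset)
qed

lemma compact_argmaxB: "e \<noteq> {} \<Longrightarrow> compact (argmaxB e p)"
  by (simp add: argmaxB_eq compact_Int_closed[OF compact_Bset closed_halfspace_ge])

lemma convex_argmaxB: "e \<noteq> {} \<Longrightarrow> convex (argmaxB e p)"
  unfolding argmaxB_eq Bset_def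
  by (simp add: convex_Int[OF convex_convex_hull convex_halfspace_ge])

lemma continuous_on_osc: "e \<noteq> {} \<Longrightarrow> continuous_on S (osc e)"
proof -
  assume "e \<noteq> {}"
  have "osc e = (\<lambda>p. MAX ab\<in>e \<times> e. p $ fst ab - p $ snd ab)"
    unfolding osc_def by (auto simp: case_prod_beta' image_def)
  then show ?thesis using \<open>e \<noteq> {}\<close>
    by (auto intro!: continuous_on_Max continuous_intros)
qed

lemma osc_face_maximizer:
  fixes p v :: "real^'a::finite"
  assumes "e \<noteq> {}"
  obtains a b where "a \<in> e" "b \<in> e" "p$a - p$b = osc e p"
    "\<And>a' b'. a' \<in> e \<Longrightarrow> b' \<in> e \<Longrightarrow> p$a' - p$b' = osc e p \<Longrightarrow> v$a' - v$b' \<le> v$a - v$b"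
proof -
  define F where "F = {(a, b). a \<in> e \<and> b \<in> e \<and> p$a - p$b = osc e p}"
  define g where "g = (\<lambda>(a, b). v$a - v$b)"
  obtain a b where "a \<in> e" "b \<in> e" "p$a - p$b = osc e p"
    using osc_attained[OF assms] .
  then have "finite F" "F \<noteq> {}"
    by (auto simp: F_def)
  then have "Max (g ` F) \<in> g ` F" "\<And>ab. ab \<in> F \<Longrightarrow> g ab \<le> Max (g ` F)"
    by auto
  then show ?thesis
    using that unfolding F_def g_def by force
qed

lemma eventually_osc_add_le:
  fixes p v :: "real^'a::finite"
  assumes ne: "e \<noteq> {}"
    and face: "\<And>a b. a \<in> e \<Longrightarrow> b \<in> e \<Longrightarrow> p$a - p$b = osc e p \<Longrightarrow> v$a - v$b \<le> c"
  shows "\<forall>\<^sub>F s in at_right 0. osc e (p + s *\<^sub>R v) \<le> osc e p + s * c"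
proof -
  have pair: "\<forall>\<^sub>F s in at_right 0. p$a - p$b + s * (v$a - v$b) \<le> osc e p + s * c"
    if ab: "a \<in> e" "b \<in> e" for a b
  proof (cases "p$a - p$b = osc e p")
    case True
    show ?thesis
      using eventually_at_right_less[of 0]
      by eventually_elim (use True face[OF ab True] in \<open>auto intro: mult_left_mono\<close>)
  next
    case False
    \<comment> \<open>pairs off the face stay strictly below the maximum for small \<open>s\<close>\<close>
    with osc_ge[OF ab, of p] have "0 < osc e p - (p$a - p$b)" by linarith
    moreover have "((\<lambda>s. osc e p + s * c - (p$a - p$b + s * (v$a - v$b)))
        \<longlongrightarrow> osc e p - (p$a - p$b)) (at_right 0)"
      by (auto intro!: tendsto_eq_intros)
    ultimately have "\<forall>\<^sub>F s in at_right 0. 0 < osc e p + s * c - (p$a - p$b + s * (v$a - v$b))"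
      by (rule order_tendstoD(1)[rotated])
    then show ?thesis
      by eventually_elim simp
  qed
  have "\<forall>\<^sub>F s in at_right 0. \<forall>ab\<in>e \<times> e.
      p$fst ab - p$snd ab + s * (v$fst ab - v$snd ab) \<le> osc e p + s * c"
    by (rule eventually_ball_finite) (auto intro: pair)
  then show ?thesis
  proof eventually_elim
    case (elim s)
    obtain a b where "a \<in> e" "b \<in> e" "(p + s *\<^sub>R v)$a - (p + s *\<^sub>R v)$b = osc e (p + s *\<^sub>R v)"
      using osc_attained[OF ne] .
    with elim show ?case by (force simp: algebra_simps)
  qed
qed

section \<open>Monotonicity of the normalized Laplacian\<close>

lemma finite_hyperedges: "finite (E :: 'a::finite set set)"
  by (rule finite_subset[of _ UNIV]) auto

lemma winner_Dinv: "winner E w a (g1 - g2) = a \<bullet> (Dinv E w g1 - Dinv E w g2)"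
  unfolding winner_def Dinv_def inner_vec_def
  by (intro sum.cong refl) (simp add: diff_divide_distrib algebra_simps)

lemma winner_delta_diff: "winner E w f (delta x - delta y) = f$x / hdeg E w x - f$y / hdeg E w y"
proof -
  have "f$z * (delta x - delta y)$z / hdeg E w z
      = (if z = x then f$x / hdeg E w x else 0) - (if z = y then f$y / hdeg E w y else 0)" for z
    by (simp add: delta_nth diff_divide_distrib right_diff_distrib)
  then show ?thesis
    unfolding winner_def by (simp add: sum_subtractf)
qed

lemma hdist_le_1:
  assumes "e \<in> E" "a \<in> e" "b \<in> e"
  shows "hdist E a b \<le> 1"
proof -
  have "hchain E a b 1" unfolding hchain_def hadj_def using assms
    by (intro exI[of _ "\<lambda>i::nat. if i = 0 then a else b"]) auto
  then show ?thesis unfolding hdist_def by (rule Least_le)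
qed

locale hypergraph =
  fixes E :: "'a::finite set set" and w :: "'a set \<Rightarrow> real"
  assumes edge_nonempty: "e \<in> E \<Longrightarrow> e \<noteq> {}"
    and weight_pos: "e \<in> E \<Longrightarrow> 0 < w e"
    and degree_pos: "0 < hdeg E w x"
begin

abbreviation deg :: "'a \<Rightarrow> real" where "deg \<equiv> hdeg E w"

lemma hLap_eq_osc: "hLap E w p = {\<Sum>e\<in>E. (w e * osc e p) *\<^sub>R b e | b. \<forall>e\<in>E. b e \<in> argmaxB e p}"
proof -
  have eq: "(\<Sum>e\<in>E. (w e * (b e \<bullet> p)) *\<^sub>R b e) = (\<Sum>e\<in>E. (w e * osc e p) *\<^sub>R b e)"
    if "\<forall>e\<in>E. b e \<in> argmaxB e p" for b
    using that by (intro sum.cong) (auto simp: inner_argmaxB edge_nonempty)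
  show ?thesis
    unfolding hLap_def
  proof (intro Collect_cong iffI; elim exE conjE)
    fix z b assume "z = (\<Sum>e\<in>E. (w e * (b e \<bullet> p)) *\<^sub>R b e)" "\<forall>e\<in>E. b e \<in> argmaxB e p"
    then show "\<exists>b. z = (\<Sum>e\<in>E. (w e * osc e p) *\<^sub>R b e) \<and> (\<forall>e\<in>E. b e \<in> argmaxB e p)"
      by (intro exI[of _ b]) (simp add: eq)
  next
    fix z b assume "z = (\<Sum>e\<in>E. (w e * osc e p) *\<^sub>R b e)" "\<forall>e\<in>E. b e \<in> argmaxB e p"
    then show "\<exists>b. z = (\<Sum>e\<in>E. (w e * (b e \<bullet> p)) *\<^sub>R b e) \<and> (\<forall>e\<in>E. b e \<in> argmaxB e p)"
      by (intro exI[of _ b]) (simp add: eq)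
  qed
qed

lemma compact_hLap: "compact (hLap E w p)" and convex_hLap: "convex (hLap E w p)"
  unfolding hLap_eq_osc
  using compact_convex_weighted_sums[OF finite_hyperedges, where A="\<lambda>e. argmaxB e p"]
  by (auto simp: compact_argmaxB convex_argmaxB edge_nonempty)

lemma hLap_monotone:
  assumes u: "u \<in> hLap E w p" and v: "v \<in> hLap E w q"
  shows "0 \<le> (u - v) \<bullet> (p - q)"
proof -
  obtain b where b: "\<forall>e\<in>E. b e \<in> argmaxB e p" "u = (\<Sum>e\<in>E. (w e * (b e \<bullet> p)) *\<^sub>R b e)"
    using u unfolding hLap_def by blast
  obtain c where c: "\<forall>e\<in>E. c e \<in> argmaxB e q" "v = (\<Sum>e\<in>E. (w e * (c e \<bullet> q)) *\<^sub>R c e)"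
    using v unfolding hLap_def by blast
  have "(u - v) \<bullet> (p - q) = (\<Sum>e\<in>E. w e *
      ((b e \<bullet> p) * (b e \<bullet> p - b e \<bullet> q) - (c e \<bullet> q) * (c e \<bullet> p - c e \<bullet> q)))"
    unfolding b(2) c(2)
    by (simp add: sum_subtractf[symmetric] inner_sum_left inner_diff_left inner_diff_right algebra_simps)
  also have "\<dots> \<ge> 0"
  proof (intro sum_nonneg mult_nonneg_nonneg)
    fix e assume e: "e \<in> E"
    then show "0 \<le> w e" using weight_pos less_imp_le by blast
    have bp: "c e \<bullet> p \<le> b e \<bullet> p" and cq: "b e \<bullet> q \<le> c e \<bullet> q"
      using b(1) c(1) e unfolding argmaxB_def by auto
    have "0 \<le> b e \<bullet> p" "0 \<le> c e \<bullet> q"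
      using b(1) c(1) e inner_argmaxB[OF edge_nonempty[OF e]] osc_nonneg[OF edge_nonempty[OF e]]
      by auto
    then have "(b e \<bullet> p) * (b e \<bullet> q) \<le> (b e \<bullet> p) * (c e \<bullet> q)"
      and "(c e \<bullet> q) * (c e \<bullet> p) \<le> (c e \<bullet> q) * (b e \<bullet> p)"
      using bp cq by (simp_all add: mult_left_mono)
    moreover have "0 \<le> (b e \<bullet> p - c e \<bullet> q)\<^sup>2" by simp
    ultimately show "0 \<le> (b e \<bullet> p) * (b e \<bullet> p - b e \<bullet> q) - (c e \<bullet> q) * (c e \<bullet> p - c e \<bullet> q)"
      by (simp add: power2_eq_square algebra_simps)
  qed
  finally show ?thesis .
qed

definition Dinvsqrt :: "real^'a \<Rightarrow> real^'a" where
  "Dinvsqrt f = (\<chi> x. f$x / sqrt (deg x))"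

lemma Dinvsqrt_diff: "Dinvsqrt (f - g) = Dinvsqrt f - Dinvsqrt g"
  by (simp add: Dinvsqrt_def vec_eq_iff diff_divide_distrib)

lemma Dinvsqrt_scaleR: "Dinvsqrt (c *\<^sub>R f) = c *\<^sub>R Dinvsqrt f"
  by (simp add: Dinvsqrt_def vec_eq_iff)

lemma Dinvsqrt_eq_iff: "Dinvsqrt f = Dinvsqrt g \<longleftrightarrow> f = g"
  using degree_pos by (auto simp: Dinvsqrt_def vec_eq_iff less_imp_neq[symmetric])

lemma winner_eq_inner_Dinvsqrt: "winner E w f g = Dinvsqrt f \<bullet> Dinvsqrt g"
  unfolding winner_def Dinvsqrt_def inner_vec_def
  using degree_pos by (intro sum.cong refl) (simp add: less_imp_le)

lemma norm_Dinvsqrt_sq: "(norm (Dinvsqrt f))\<^sup>2 = (\<Sum>x\<in>UNIV. (f$x)\<^sup>2 / deg x)"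
  using winner_eq_inner_Dinvsqrt[of f f]
  by (simp add: winner_def power2_eq_square norm_eq_sqrt_inner)

lemma norm_Dinvsqrt_delta: "norm (Dinvsqrt (delta x)) = 1 / sqrt (deg x)"
proof -
  have "Dinvsqrt (delta x) = (1 / sqrt (deg x)) *\<^sub>R axis x 1"
    by (simp add: Dinvsqrt_def vec_eq_iff delta_nth axis_def)
  then show ?thesis using degree_pos[of x] by simp
qed

lemma hLnorm_monotone:
  assumes "u1 \<in> hLnorm E w g1" "u2 \<in> hLnorm E w g2"
  shows "0 \<le> (Dinvsqrt u1 - Dinvsqrt u2) \<bullet> (Dinvsqrt g1 - Dinvsqrt g2)"
  using hLap_monotone assms
  by (simp add: hLnorm_def winner_Dinv flip: winner_eq_inner_Dinvsqrt Dinvsqrt_diff)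

section \<open>Existence of the resolvent\<close>

text \<open>The variational functional of \<open>J\<^sub>\<lambda>\<close> in the variable \<open>p = D\<^sup>-\<^sup>1g\<close>:
  \<open>\<parallel>f - g\<parallel>\<^sup>2/(2\<lambda>) + Q(p)\<close>, since \<open>osc e p\<close> is the maximal difference of \<open>p\<close> on \<open>e\<close>.\<close>

definition energy :: "real \<Rightarrow> real^'a \<Rightarrow> real^'a \<Rightarrow> real" where
  "energy lam f p = (\<Sum>x\<in>UNIV. (f$x - deg x * p$x)\<^sup>2 / deg x) / (2 * lam)
     + (\<Sum>e\<in>E. w e * (osc e p)\<^sup>2) / 2"

definition residual :: "real \<Rightarrow> real^'a \<Rightarrow> real^'a \<Rightarrow> real^'a" where
  "residual lam f p = (\<chi> x. (f$x - deg x * p$x) / lam)"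

lemma continuous_on_energy: "continuous_on S (energy lam f)"
  unfolding energy_def divide_inverse
  by (intro continuous_intros continuous_on_osc edge_nonempty)

lemma energy_coercive:
  assumes "0 < lam"
  shows "Min (range deg) / 2 * (norm q)\<^sup>2 \<le> 2 * lam * energy lam f q + (\<Sum>x\<in>UNIV. (f$x)\<^sup>2 / deg x)"
proof -
  have pointwise: "Min (range deg) / 2 * (q$x)\<^sup>2 - (f$x)\<^sup>2 / deg x \<le> (f$x - deg x * q$x)\<^sup>2 / deg x" for x
  proof -
    have "(f$x - deg x * q$x)\<^sup>2
        = (deg x * (q$x)\<^sup>2 / 2 - (f$x)\<^sup>2 / deg x) * deg x + (2 * f$x - deg x * q$x)\<^sup>2 / 2"
      using degree_pos[of x] by (simp add: field_simps power2_eq_square)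
    then have "(deg x * (q$x)\<^sup>2 / 2 - (f$x)\<^sup>2 / deg x) * deg x \<le> (f$x - deg x * q$x)\<^sup>2"
      by simp
    then have "deg x * (q$x)\<^sup>2 / 2 - (f$x)\<^sup>2 / deg x \<le> (f$x - deg x * q$x)\<^sup>2 / deg x"
      using degree_pos[of x] by (simp add: pos_le_divide_eq)
    moreover have "Min (range deg) * (q$x)\<^sup>2 \<le> deg x * (q$x)\<^sup>2"
      by (intro mult_right_mono) auto
    ultimately show ?thesis by simp
  qed
  have "Min (range deg) / 2 * (norm q)\<^sup>2 - (\<Sum>x\<in>UNIV. (f$x)\<^sup>2 / deg x)
      = (\<Sum>x\<in>UNIV. Min (range deg) / 2 * (q$x)\<^sup>2 - (f$x)\<^sup>2 / deg x)"
    by (simp add: power2_norm_eq_inner inner_vec_def sum_subtractf sum_distrib_left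
        flip: power2_eq_square)
  also have "\<dots> \<le> (\<Sum>x\<in>UNIV. (f$x - deg x * q$x)\<^sup>2 / deg x)"
    by (rule sum_mono) (rule pointwise)
  also have "\<dots> \<le> 2 * lam * energy lam f q"
    using assms weight_pos by (simp add: energy_def field_simps sum_nonneg less_imp_le)
  finally show ?thesis by simp
qed

lemma energy_has_minimizer:
  assumes "0 < lam"
  obtains p where "\<And>q. energy lam f p \<le> energy lam f q"
proof -
  define K where "K = {q. energy lam f q \<le> energy lam f 0}"
  define R where "R = (2 * lam * energy lam f 0 + (\<Sum>x\<in>UNIV. (f$x)\<^sup>2 / deg x)) / (Min (range deg) / 2)"
  have "0 < Min (range deg)"
    using degree_pos by simp
  then have "norm q \<le> sqrt R" if "q \<in> K" for q
    using that energy_coercive[OF assms, of q f] assms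
    by (intro real_le_rsqrt) (auto simp: K_def R_def pos_le_divide_eq mult.commute order_trans)
  then have "bounded K"
    by (auto simp: bounded_iff)
  moreover have "closed K"
    unfolding K_def by (intro closed_Collect_le continuous_on_energy continuous_on_const)
  ultimately obtain p where "p \<in> K" "\<And>q. q \<in> K \<Longrightarrow> energy lam f p \<le> energy lam f q"
    using continuous_attains_inf[of K "energy lam f"] continuous_on_energy
    by (metis compact_eq_bounded_closed empty_iff K_def mem_Collect_eq order_refl)
  then show ?thesis
    using that by (metis K_def mem_Collect_eq nle_le order_trans)
qed

lemma energy_add_le:
  assumes "0 < lam" "0 \<le> s"
    and osc_le: "\<And>e. e \<in> E \<Longrightarrow> osc e (p + s *\<^sub>R v) \<le> osc e p + s * c e"
  shows "energy lam f (p + s *\<^sub>R v) \<le> energy lam f p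
     - s * (residual lam f p \<bullet> v) + s * (\<Sum>e\<in>E. w e * osc e p * c e)
     + s\<^sup>2 * ((\<Sum>x\<in>UNIV. deg x * (v$x)\<^sup>2) / (2 * lam) + (\<Sum>e\<in>E. w e * (c e)\<^sup>2) / 2)"
proof -
  have "(f$x - deg x * (p + s *\<^sub>R v)$x)\<^sup>2 / deg x / (2 * lam)
      = (f$x - deg x * p$x)\<^sup>2 / deg x / (2 * lam) - s * (residual lam f p $ x * v$x)
        + s\<^sup>2 * (deg x * (v$x)\<^sup>2 / (2 * lam))" for x
    using degree_pos[of x] assms(1) by (simp add: residual_def field_simps power2_eq_square)
  then have quadratic: "(\<Sum>x\<in>UNIV. (f$x - deg x * (p + s *\<^sub>R v)$x)\<^sup>2 / deg x) / (2 * lam)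
      = (\<Sum>x\<in>UNIV. (f$x - deg x * p$x)\<^sup>2 / deg x) / (2 * lam) - s * (residual lam f p \<bullet> v)
        + s\<^sup>2 * ((\<Sum>x\<in>UNIV. deg x * (v$x)\<^sup>2) / (2 * lam))"
    by (simp add: sum_divide_distrib sum.distrib sum_subtractf sum_distrib_left inner_vec_def)
  have per_edge: "w e * (osc e (p + s *\<^sub>R v))\<^sup>2 / 2
      \<le> w e * (osc e p)\<^sup>2 / 2 + s * (w e * osc e p * c e) + s\<^sup>2 * (w e * (c e)\<^sup>2 / 2)"
    if e: "e \<in> E" for e
  proof -
    have "(osc e (p + s *\<^sub>R v))\<^sup>2 \<le> (osc e p + s * c e)\<^sup>2"
      using osc_le[OF e] osc_nonneg[OF edge_nonempty[OF e]] by (intro power_mono) auto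
    then have "w e * (osc e (p + s *\<^sub>R v))\<^sup>2 \<le> w e * (osc e p + s * c e)\<^sup>2"
      using weight_pos[OF e] by (intro mult_left_mono) auto
    then show ?thesis by (simp add: power2_eq_square algebra_simps)
  qed
  have "(\<Sum>e\<in>E. w e * (osc e (p + s *\<^sub>R v))\<^sup>2) / 2 = (\<Sum>e\<in>E. w e * (osc e (p + s *\<^sub>R v))\<^sup>2 / 2)"
    by (simp add: sum_divide_distrib)
  also have "\<dots> \<le> (\<Sum>e\<in>E. w e * (osc e p)\<^sup>2 / 2 + s * (w e * osc e p * c e) + s\<^sup>2 * (w e * (c e)\<^sup>2 / 2))"
    by (rule sum_mono) (rule per_edge)
  also have "\<dots> = (\<Sum>e\<in>E. w e * (osc e p)\<^sup>2) / 2 + s * (\<Sum>e\<in>E. w e * osc e p * c e)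
        + s\<^sup>2 * ((\<Sum>e\<in>E. w e * (c e)\<^sup>2) / 2)"
    by (simp add: sum.distrib sum_distrib_left sum_divide_distrib)
  finally have "(\<Sum>e\<in>E. w e * (osc e (p + s *\<^sub>R v))\<^sup>2) / 2
      \<le> (\<Sum>e\<in>E. w e * (osc e p)\<^sup>2) / 2 + s * (\<Sum>e\<in>E. w e * osc e p * c e)
        + s\<^sup>2 * ((\<Sum>e\<in>E. w e * (c e)\<^sup>2) / 2)" .
  with quadratic show ?thesis
    unfolding energy_def by (simp add: algebra_simps)
qed

lemma residual_in_hLap_of_minimizer:
  assumes "0 < lam" and minimal: "\<And>q. energy lam f p \<le> energy lam f q"
  shows "residual lam f p \<in> hLap E w p"
proof (rule ccontr)
  let ?t = "residual lam f p"
  assume "?t \<notin> hLap E w p"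
  then obtain a \<beta> where sep: "a \<bullet> ?t < \<beta>" "\<And>s. s \<in> hLap E w p \<Longrightarrow> \<beta> < a \<bullet> s"
    using separating_hyperplane_closed_point[OF convex_hLap compact_imp_closed[OF compact_hLap]]
    by blast
  define v where "v = - a"
  \<comment> \<open>Along \<open>v\<close>, \<open>osc e\<close> grows at the rate of the best pair on its active face; the element of
    \<open>hLap E w p\<close> built from these pairs makes the energy decrease to first order.\<close>
  have "\<forall>e\<in>E. \<exists>a b. a \<in> e \<and> b \<in> e \<and> p$a - p$b = osc e p \<and>
      (\<forall>a'\<in>e. \<forall>b'\<in>e. p$a' - p$b' = osc e p \<longrightarrow> v$a' - v$b' \<le> v$a - v$b)"
    by (metis osc_face_maximizer edge_nonempty)
  then obtain ha hb where face: "\<forall>e\<in>E. ha e \<in> e \<and> hb e \<in> e \<and> p$ha e - p$hb e = osc e p \<and>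
      (\<forall>a'\<in>e. \<forall>b'\<in>e. p$a' - p$b' = osc e p \<longrightarrow> v$a' - v$b' \<le> v$ha e - v$hb e)"
    by metis
  define c where "c e = v$ha e - v$hb e" for e
  define s0 where "s0 = (\<Sum>e\<in>E. (w e * osc e p) *\<^sub>R (delta (ha e) - delta (hb e)))"
  have "\<forall>e\<in>E. delta (ha e) - delta (hb e) \<in> argmaxB e p"
    using face by (auto intro: delta_diff_in_argmaxB)
  then have "s0 \<in> hLap E w p"
    unfolding hLap_eq_osc s0_def mem_Collect_eq
    by (intro exI[where x="\<lambda>e. delta (ha e) - delta (hb e)"]) simp
  moreover have "s0 \<bullet> v = (\<Sum>e\<in>E. w e * osc e p * c e)"
    unfolding s0_def c_def inner_sum_left by (simp add: inner_diff_left inner_delta)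
  ultimately have gap: "0 < ?t \<bullet> v - (\<Sum>e\<in>E. w e * osc e p * c e)"
    using sep by (fastforce simp: v_def inner_commute)
  define C where "C = (\<Sum>x\<in>UNIV. deg x * (v$x)\<^sup>2) / (2 * lam) + (\<Sum>e\<in>E. w e * (c e)\<^sup>2) / 2"
  have "\<forall>\<^sub>F s in at_right 0. \<forall>e\<in>E. osc e (p + s *\<^sub>R v) \<le> osc e p + s * c e"
    using face unfolding c_def
    by (intro eventually_ball_finite finite_hyperedges ballI eventually_osc_add_le edge_nonempty) auto
  moreover have "\<forall>\<^sub>F s in at_right 0. s * C < ?t \<bullet> v - (\<Sum>e\<in>E. w e * osc e p * c e)"
    using gap by (intro order_tendstoD(2)[of _ 0]) (auto intro!: tendsto_eq_intros)
  ultimately have "\<forall>\<^sub>F s in at_right 0. energy lam f (p + s *\<^sub>R v) < energy lam f p"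
    using eventually_at_right_less[of 0]
  proof eventually_elim
    case (elim s)
    then have "energy lam f (p + s *\<^sub>R v)
        \<le> energy lam f p - s * (?t \<bullet> v - (\<Sum>e\<in>E. w e * osc e p * c e) - s * C)"
      using energy_add_le[OF assms(1), where s=s and p=p and v=v and c=c and f=f] unfolding C_def
      by (simp add: power2_eq_square algebra_simps)
    also have "\<dots> < energy lam f p"
      using elim by simp
    finally show ?case .
  qed
  then obtain s where "energy lam f (p + s *\<^sub>R v) < energy lam f p"
    using eventually_happens'[OF trivial_limit_at_right_real] by blast
  with minimal show False
    by (meson not_le)
qed

lemma resolvent_exists:
  assumes "0 < lam"
  shows "\<exists>g. \<exists>u\<in>hLnorm E w g. f = g + lam *\<^sub>R u"
proof -
  obtain p where "\<And>q. energy lam f p \<le> energy lam f q"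
    using energy_has_minimizer[OF assms, where f=f] by blast
  then have "residual lam f p \<in> hLap E w p"
    by (rule residual_in_hLap_of_minimizer[OF assms])
  moreover have "Dinv E w (\<chi> x. deg x * p$x) = p"
    using degree_pos by (simp add: Dinv_def vec_eq_iff less_imp_neq[symmetric])
  moreover have "f = (\<chi> x. deg x * p$x) + lam *\<^sub>R residual lam f p"
    using assms by (simp add: residual_def vec_eq_iff)
  ultimately show ?thesis
    unfolding hLnorm_def by metis
qed

lemma resolvent_unique:
  assumes "0 < lam" "u1 \<in> hLnorm E w g1" "u2 \<in> hLnorm E w g2"
    and "f = g1 + lam *\<^sub>R u1" "f = g2 + lam *\<^sub>R u2"
  shows "g1 = g2"
proof -
  define A where "A = Dinvsqrt u1 - Dinvsqrt u2"
  have "g1 - g2 = - lam *\<^sub>R (u1 - u2)"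
    using assms(4,5) by (simp add: algebra_simps)
  then have "Dinvsqrt g1 - Dinvsqrt g2 = - lam *\<^sub>R A"
    unfolding A_def Dinvsqrt_diff[symmetric] Dinvsqrt_scaleR[symmetric] by simp
  moreover have "0 \<le> A \<bullet> (Dinvsqrt g1 - Dinvsqrt g2)"
    unfolding A_def by (rule hLnorm_monotone[OF assms(2,3)])
  ultimately have "A \<bullet> A \<le> 0"
    using assms(1) by (simp add: mult_le_0_iff)
  then have "A = 0"
    by (metis inner_gt_zero_iff not_le)
  then show ?thesis
    using assms(4,5) by (simp add: A_def Dinvsqrt_eq_iff)
qed

lemma resolventE:
  assumes "0 < lam"
  obtains u where "u \<in> hLnorm E w (resolvent E w lam f)" "f = resolvent E w lam f + lam *\<^sub>R u"
proof -
  have "\<exists>!g. \<exists>u\<in>hLnorm E w g. f = g + lam *\<^sub>R u"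
    using resolvent_exists[OF assms, of f] resolvent_unique[OF assms] by blast
  then have "\<exists>u\<in>hLnorm E w (resolvent E w lam f). f = resolvent E w lam f + lam *\<^sub>R u"
    unfolding resolvent_def by (rule theI')
  then show ?thesis
    using that by blast
qed

section \<open>Resolvent estimates\<close>

lemma hvol_nonneg: "0 \<le> hvol E w"
  unfolding hvol_def using degree_pos by (simp add: sum_nonneg less_imp_le)

lemma hLnorm_has_small_element:
  assumes "f \<in> Lip1w E w"
  obtains u where "u \<in> hLnorm E w f" "norm (Dinvsqrt u) \<le> sqrt (hvol E w)"
proof -
  define p where "p = Dinv E w f"
  have "\<forall>e\<in>E. \<exists>a b. a \<in> e \<and> b \<in> e \<and> p$a - p$b = osc e p"
    by (metis osc_attained edge_nonempty)
  then obtain ha hb where ab: "\<forall>e\<in>E. ha e \<in> e \<and> hb e \<in> e \<and> p$ha e - p$hb e = osc e p"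
    by metis
  define b where "b e = delta (ha e) - delta (hb e)" for e
  define u where "u = (\<Sum>e\<in>E. (w e * (b e \<bullet> p)) *\<^sub>R b e)"
  have "\<forall>e\<in>E. b e \<in> argmaxB e p"
    using ab by (auto simp: b_def intro: delta_diff_in_argmaxB)
  then have "u \<in> hLnorm E w f"
    unfolding hLnorm_def hLap_def u_def p_def[symmetric] by blast
  \<comment> \<open>\<open>f\<close> being weighted \<open>1\<close>-Lipschitz, every edge contributes at most its weight at each vertex.\<close>
  have slope: "\<bar>b e \<bullet> p\<bar> \<le> 1" if e: "e \<in> E" for e
  proof -
    have "\<bar>b e \<bullet> p\<bar> = \<bar>f$ha e / deg (ha e) - f$hb e / deg (hb e)\<bar>"
      by (simp add: b_def p_def inner_diff_left inner_delta Dinv_def)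
    also have "\<dots> \<le> real (hdist E (ha e) (hb e))"
      using assms unfolding Lip1w_def by blast
    also have "\<dots> \<le> 1"
      using hdist_le_1[OF e] ab e by simp
    finally show ?thesis .
  qed
  have edge_bound: "\<bar>w e * (b e \<bullet> p) * b e $ x\<bar> \<le> (if x \<in> e then w e else 0)" if e: "e \<in> E" for e x
  proof -
    have "\<bar>b e $ x\<bar> \<le> (if x \<in> e then 1 else 0)"
      using ab e by (auto simp: b_def delta_nth)
    then have "\<bar>b e \<bullet> p\<bar> * \<bar>b e $ x\<bar> \<le> 1 * (if x \<in> e then 1 else 0)"
      using slope[OF e] by (intro mult_mono) auto
    then have "w e * (\<bar>b e \<bullet> p\<bar> * \<bar>b e $ x\<bar>) \<le> w e * (if x \<in> e then 1 else 0)"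
      using weight_pos[OF e] by (intro mult_left_mono) auto
    then show ?thesis
      using weight_pos[OF e] by (auto simp: abs_mult mult.assoc mult_le_0_iff)
  qed
  have "\<bar>u$x\<bar> \<le> deg x" for x
  proof -
    have "\<bar>u$x\<bar> \<le> (\<Sum>e\<in>E. \<bar>w e * (b e \<bullet> p) * b e $ x\<bar>)"
      unfolding u_def sum_component by (rule order_trans[OF sum_abs]) simp
    also have "\<dots> \<le> (\<Sum>e\<in>E. if x \<in> e then w e else 0)"
      by (rule sum_mono) (rule edge_bound)
    also have "\<dots> = deg x"
      unfolding hdeg_def by (simp add: sum.inter_filter finite_hyperedges)
    finally show ?thesis .
  qed
  then have "(u$x)\<^sup>2 \<le> (deg x)\<^sup>2" for x
    using degree_pos[of x] by (metis abs_le_square_iff abs_of_pos)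
  then have "(u$x)\<^sup>2 / deg x \<le> deg x" for x
    using degree_pos[of x] by (simp add: pos_divide_le_eq power2_eq_square)
  then have "(norm (Dinvsqrt u))\<^sup>2 \<le> hvol E w"
    unfolding norm_Dinvsqrt_sq hvol_def by (intro sum_mono)
  then show ?thesis
    using that \<open>u \<in> hLnorm E w f\<close> real_le_rsqrt by blast
qed

lemma norm_resolvent_step_le:
  assumes "f \<in> Lip1w E w" "0 < lam" "u \<in> hLnorm E w g" "f = g + lam *\<^sub>R u"
  shows "norm (Dinvsqrt u) \<le> sqrt (hvol E w)"
proof -
  obtain u0 where u0: "u0 \<in> hLnorm E w f" "norm (Dinvsqrt u0) \<le> sqrt (hvol E w)"
    using hLnorm_has_small_element[OF assms(1)] .
  have "Dinvsqrt g - Dinvsqrt f = - lam *\<^sub>R Dinvsqrt u"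
    unfolding Dinvsqrt_diff[symmetric] Dinvsqrt_scaleR[symmetric] using assms(4) by simp
  moreover have "0 \<le> (Dinvsqrt u - Dinvsqrt u0) \<bullet> (Dinvsqrt g - Dinvsqrt f)"
    by (rule hLnorm_monotone[OF assms(3) u0(1)])
  ultimately have "Dinvsqrt u \<bullet> Dinvsqrt u \<le> Dinvsqrt u0 \<bullet> Dinvsqrt u"
    using assms(2) by (simp add: inner_diff_left mult_le_0_iff)
  also have "\<dots> \<le> norm (Dinvsqrt u) * norm (Dinvsqrt u0)"
    by (metis mult.commute norm_cauchy_schwarz)
  finally have "norm (Dinvsqrt u) \<le> norm (Dinvsqrt u0)"
    by (rule norm_le_of_inner_self_le) simp
  with u0(2) show ?thesis
    by linarith
qed

lemma norm_resolvent_diff_le: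
  assumes "f \<in> Lip1w E w" "0 < lam" "0 < mu"
  shows "norm (Dinvsqrt (resolvent E w lam f) - Dinvsqrt (resolvent E w mu f))
    \<le> \<bar>lam - mu\<bar> * sqrt (hvol E w)"
proof -
  obtain u1 where u1: "u1 \<in> hLnorm E w (resolvent E w lam f)" "f = resolvent E w lam f + lam *\<^sub>R u1"
    using resolventE[OF assms(2)] .
  obtain u2 where u2: "u2 \<in> hLnorm E w (resolvent E w mu f)" "f = resolvent E w mu f + mu *\<^sub>R u2"
    using resolventE[OF assms(3)] .
  define A1 where "A1 = Dinvsqrt u1"
  define A2 where "A2 = Dinvsqrt u2"
  define D where "D = Dinvsqrt (resolvent E w lam f) - Dinvsqrt (resolvent E w mu f)"
  have "resolvent E w lam f - resolvent E w mu f = mu *\<^sub>R u2 - lam *\<^sub>R u1"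
    using u1(2) u2(2) by (simp add: algebra_simps)
  then have D: "D = mu *\<^sub>R A2 - lam *\<^sub>R A1"
    unfolding D_def A1_def A2_def Dinvsqrt_diff[symmetric] Dinvsqrt_scaleR[symmetric] by simp
  have "D \<bullet> D = - mu * ((A1 - A2) \<bullet> D) + (mu - lam) * (A1 \<bullet> D)"
    by (subst (2) D) (simp add: inner_diff_left inner_diff_right inner_commute algebra_simps)
  also have "\<dots> \<le> (mu - lam) * (A1 \<bullet> D)"
    using hLnorm_monotone[OF u1(1) u2(1)] assms(3)
    by (simp add: A1_def A2_def D_def)
  also have "\<dots> \<le> \<bar>lam - mu\<bar> * \<bar>A1 \<bullet> D\<bar>"
    by (metis abs_ge_self abs_minus_commute abs_mult)
  also have "\<dots> \<le> \<bar>lam - mu\<bar> * (norm A1 * norm D)"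
    by (intro mult_left_mono Cauchy_Schwarz_ineq2) simp
  also have "\<dots> = norm D * (\<bar>lam - mu\<bar> * norm A1)"
    by simp
  finally have "norm D \<le> \<bar>lam - mu\<bar> * norm A1"
    by (rule norm_le_of_inner_self_le) simp
  also have "\<dots> \<le> \<bar>lam - mu\<bar> * sqrt (hvol E w)"
    using norm_resolvent_step_le[OF assms(1,2) u1] by (simp add: A1_def mult_left_mono)
  finally show ?thesis
    unfolding D_def .
qed

lemma norm_Dinvsqrt_delta_diff_le:
  "norm (Dinvsqrt (delta x - delta y)) \<le> 2 * (MAX v\<in>UNIV. 1 / sqrt (deg v))"
proof -
  have "norm (Dinvsqrt (delta z)) \<le> (MAX v\<in>UNIV. 1 / sqrt (deg v))" for z
    unfolding norm_Dinvsqrt_delta by (rule Max_ge) auto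
  from this[of x] this[of y] show ?thesis
    unfolding Dinvsqrt_diff
    using norm_triangle_ineq4[of "Dinvsqrt (delta x)" "Dinvsqrt (delta y)"] by linarith
qed

lemma resolvent_pairing_le:
  assumes "f \<in> Lip1w E w" "0 < lam"
  shows "winner E w (resolvent E w lam f) (delta x - delta y)
    \<le> real (hdist E x y) + lam * sqrt (hvol E w) * norm (Dinvsqrt (delta x - delta y))"
proof -
  let ?\<delta> = "Dinvsqrt (delta x - delta y)"
  obtain u where u: "u \<in> hLnorm E w (resolvent E w lam f)" "f = resolvent E w lam f + lam *\<^sub>R u"
    using resolventE[OF assms(2)] .
  then have "resolvent E w lam f = f - lam *\<^sub>R u"
    by (simp add: algebra_simps)
  then have J: "winner E w (resolvent E w lam f) (delta x - delta y)
      = winner E w f (delta x - delta y) - lam * (Dinvsqrt u \<bullet> ?\<delta>)"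
    unfolding winner_eq_inner_Dinvsqrt by (simp add: Dinvsqrt_diff Dinvsqrt_scaleR inner_diff_left)
  have "\<bar>f$x / deg x - f$y / deg y\<bar> \<le> real (hdist E x y)"
    using assms(1) unfolding Lip1w_def by blast
  then have f: "winner E w f (delta x - delta y) \<le> real (hdist E x y)"
    unfolding winner_delta_diff by (rule abs_le_D1)
  have "norm (Dinvsqrt u) * norm ?\<delta> \<le> sqrt (hvol E w) * norm ?\<delta>"
    using norm_resolvent_step_le[OF assms u] by (simp add: mult_right_mono)
  then have "- (Dinvsqrt u \<bullet> ?\<delta>) \<le> sqrt (hvol E w) * norm ?\<delta>"
    using Cauchy_Schwarz_ineq2[of "Dinvsqrt u" ?\<delta>] by linarith
  then have "lam * (- (Dinvsqrt u \<bullet> ?\<delta>)) \<le> lam * (sqrt (hvol E w) * norm ?\<delta>)"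
    by (rule mult_left_mono) (use assms(2) in simp)
  with J f show ?thesis
    by (simp add: algebra_simps)
qed

lemma resolvent_pairing_diff_le:
  assumes "f \<in> Lip1w E w" "0 < lam" "0 < mu"
  shows "\<bar>winner E w (resolvent E w lam f) (delta x - delta y) - winner E w (resolvent E w mu f) (delta x - delta y)\<bar>
    \<le> 2 * (MAX v\<in>UNIV. 1 / sqrt (deg v)) * sqrt (hvol E w) * \<bar>lam - mu\<bar>"
proof -
  have "\<bar>winner E w (resolvent E w lam f) (delta x - delta y) - winner E w (resolvent E w mu f) (delta x - delta y)\<bar>
      \<le> norm (Dinvsqrt (resolvent E w lam f) - Dinvsqrt (resolvent E w mu f)) * norm (Dinvsqrt (delta x - delta y))"
    unfolding winner_eq_inner_Dinvsqrt inner_diff_left[symmetric] by (rule Cauchy_Schwarz_ineq2)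
  also have "\<dots> \<le> (\<bar>lam - mu\<bar> * sqrt (hvol E w)) * (2 * (MAX v\<in>UNIV. 1 / sqrt (deg v)))"
    using norm_resolvent_diff_le[OF assms] norm_Dinvsqrt_delta_diff_le hvol_nonneg
    by (intro mult_mono) auto
  finally show ?thesis
    by (simp add: algebra_simps)
qed

end

theorem mainTheorem7:
  fixes E :: "'a::finite set set" and w :: "'a set \<Rightarrow> real"
    and lam mu :: real and x y :: 'a
  assumes "\<forall>e\<in>E. e \<noteq> {}"
    and "\<forall>e\<in>E. w e > 0"
    and "hconnected E"
    and "\<forall>v. hdeg E w v > 0"
    and "lam > 0" and "mu > 0"
  shows "\<bar>KD E w lam x y - KD E w mu x y\<bar>
    \<le> 2 * (MAX v\<in>UNIV. 1 / sqrt (hdeg E w v)) * sqrt (hvol E w) * \<bar>lam - mu\<bar>"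
proof -
  interpret hypergraph E w
    using assms(1,2,4) by unfold_locales auto
  define pairing where "pairing l f = winner E w (resolvent E w l f) (delta x - delta y)" for l f
  have KD: "KD E w l x y = Sup (pairing l ` Lip1w E w)" for l
    unfolding KD_def pairing_def by (simp add: Setcompr_eq_image)
  have bdd: "bdd_above (pairing l ` Lip1w E w)" if "0 < l" for l
    using resolvent_pairing_le[OF _ that] unfolding pairing_def by (intro bdd_aboveI2) blast
  have "0 \<in> Lip1w E w"
    by (simp add: Lip1w_def)
  then show ?thesis
    unfolding KD using bdd assms(5,6) resolvent_pairing_diff_le[OF _ assms(5,6)]
    by (intro abs_cSUP_diff_le) (auto simp: pairing_def)
qed

end
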